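(* Let $\mathbb F$ be a field and $G,F_1,\dots,F_m\in\mathbb F[x_1,\dots,x_n]$. If there is an RIPS certificate that $G\in\sqrt{\langle F_1,\dots,F_m\rangle}$, then there is a Hilbert-like RIPS certificate that $G\in\sqrt{\langle F_1,\dots,F_m\rangle}$.
   Context: RIPS certificate that $G\in\sqrt{\langle F_1,\dots,F_m\rangle}$: a rational function $C(\vec x,\vec y)$ in $\vec x$ and placeholder variables $y_1,\dots,y_m$, written $C=C'/D$ with $C',D$ relatively prime polynomials, such that (0) if $G$ is an invertible constant then $D$ is constant, and otherwise $D(\vec x,\vec F(\vec x))$ does not vanish identically on any irreducible component over $\overline{\mathbb F}$ of $V(F_1,\dots,F_m)$; (1) $C(\vec x,\vec0)=0$; (2) $C(\vec x,F_1(\vec x),\dots,F_m(\vec x))=G(\vec x)$. It is Hilbert-like if it has the form $\frac{1}{D(\vec x)}\sum_iy_iG_i(\vec x)$, i.e. the denominator does not involve the $y_i$ and the numerator is linear in the $y_i$. *)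

theory Defs
  imports "HOL-Library.Poly_Mapping" "HOL-Algebra.Algebraic_Closure_Type"
begin

text \<open>Variable number i is x_i
  (indexing from 0). Polynomials in x_1..x_n use variables 0..n-1; the placeholder
  variables y_1..y_m are the variables n..n+m-1.\<close>

type_synonym 'a mpoly = "(nat \<Rightarrow>\<^sub>0 nat) \<Rightarrow>\<^sub>0 'a"

definition mvars :: "'a::zero mpoly \<Rightarrow> nat set" where
  "mvars p = \<Union> (Poly_Mapping.keys ` Poly_Mapping.keys p)"

definition mconst :: "'a::zero \<Rightarrow> 'a mpoly" where
  "mconst c = Poly_Mapping.single 0 c"

definition mvar :: "nat \<Rightarrow> 'a::{zero,one} mpoly" where
  "mvar i = Poly_Mapping.single (Poly_Mapping.single i 1) 1"

definition mpeval :: "('a::zero \<Rightarrow> 'b::comm_semiring_1) \<Rightarrow> 'a mpoly \<Rightarrow> (nat \<Rightarrow> 'b) \<Rightarrow> 'b" where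
  "mpeval phi p a = (\<Sum>mon\<in>Poly_Mapping.keys p. phi (Poly_Mapping.lookup p mon) * (\<Prod>i\<in>Poly_Mapping.keys mon. a i ^ Poly_Mapping.lookup mon i))"

definition subst_y :: "nat \<Rightarrow> nat \<Rightarrow> (nat \<Rightarrow> 'a::comm_ring_1 mpoly) \<Rightarrow> 'a mpoly \<Rightarrow> 'a mpoly" where
  "subst_y n m Y p = mpeval mconst p (\<lambda>i. if i < n then mvar i else if i < n + m then Y (i - n) else 0)"

definition aff_pts :: "nat \<Rightarrow> (nat \<Rightarrow> 'a::field alg_closure) set" where
  "aff_pts n = {p. \<forall>i\<ge>n. p i = 0}"

definition zclosed :: "nat \<Rightarrow> (nat \<Rightarrow> 'a::field alg_closure) set \<Rightarrow> bool" where
  "zclosed n Z \<longleftrightarrow> (\<exists>S :: 'a alg_closure mpoly set. (\<forall>q\<in>S. mvars q \<subseteq> {..<n}) \<and>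
      Z = {p \<in> aff_pts n. \<forall>q\<in>S. mpeval id q p = 0})"

definition zirreducible :: "nat \<Rightarrow> (nat \<Rightarrow> 'a::field alg_closure) set \<Rightarrow> bool" where
  "zirreducible n Z \<longleftrightarrow> Z \<noteq> {} \<and>
     (\<forall>A B. zclosed n A \<longrightarrow> zclosed n B \<longrightarrow> Z \<subseteq> A \<union> B \<longrightarrow> Z \<subseteq> A \<or> Z \<subseteq> B)"

definition variety :: "nat \<Rightarrow> nat \<Rightarrow> (nat \<Rightarrow> 'a::field mpoly) \<Rightarrow> (nat \<Rightarrow> 'a alg_closure) set" where
  "variety n m F = {p \<in> aff_pts n. \<forall>i<m. mpeval to_ac (F i) p = 0}"

definition irr_component :: "nat \<Rightarrow> (nat \<Rightarrow> 'a::field alg_closure) set \<Rightarrow> (nat \<Rightarrow> 'a alg_closure) set \<Rightarrow> bool" where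
  "irr_component n V Z \<longleftrightarrow> zclosed n Z \<and> zirreducible n Z \<and> Z \<subseteq> V \<and>
     (\<forall>Z'. zclosed n Z' \<longrightarrow> zirreducible n Z' \<longrightarrow> Z \<subseteq> Z' \<longrightarrow> Z' \<subseteq> V \<longrightarrow> Z' = Z)"

text \<open>RIPS certificate C = Cn / D (Cn, D coprime polynomials in x, y) that G is in the
  radical of the ideal generated by F_0..F_(m-1).\<close>
definition RIPS_cert :: "nat \<Rightarrow> nat \<Rightarrow> (nat \<Rightarrow> 'a::field mpoly) \<Rightarrow> 'a mpoly \<Rightarrow> 'a mpoly \<Rightarrow> 'a mpoly \<Rightarrow> bool" where
  "RIPS_cert n m F G Cn D \<longleftrightarrow>
     mvars Cn \<subseteq> {..<n+m} \<and> mvars D \<subseteq> {..<n+m} \<and> D \<noteq> 0 \<and> (\<forall>c. c dvd Cn \<longrightarrow> c dvd D \<longrightarrow> c dvd 1) \<and>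
     \<comment> \<open>(0)\<close>
     ((\<exists>c. c \<noteq> 0 \<and> G = mconst c) \<longrightarrow> (\<exists>d. D = mconst d)) \<and>
     ((\<not> (\<exists>c. c \<noteq> 0 \<and> G = mconst c)) \<longrightarrow>
        (\<forall>Z. irr_component n (variety n m F) Z \<longrightarrow>
             \<not> (\<forall>p\<in>Z. mpeval to_ac (subst_y n m F D) p = 0))) \<and>
     \<comment> \<open>(1): C(x,0) = 0\<close>
     subst_y n m (\<lambda>_. 0) Cn = 0 \<and>
     \<comment> \<open>(2): C(x,F(x)) = G(x), denominator D(x,F(x)) nonzero\<close>
     subst_y n m F D \<noteq> 0 \<and> subst_y n m F Cn = G * subst_y n m F D"

definition Hilbert_like_RIPS_cert :: "nat \<Rightarrow> nat \<Rightarrow> (nat \<Rightarrow> 'a::field mpoly) \<Rightarrow> 'a mpoly \<Rightarrow> 'a mpoly \<Rightarrow> 'a mpoly \<Rightarrow> bool" where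
  "Hilbert_like_RIPS_cert n m F G Cn D \<longleftrightarrow> RIPS_cert n m F G Cn D \<and> mvars D \<subseteq> {..<n} \<and>
     (\<exists>Gs. (\<forall>i<m. mvars (Gs i) \<subseteq> {..<n}) \<and> Cn = (\<Sum>i<m. mvar (n + i) * Gs i))"

end

theory Submission
  imports Defs
begin

text \<open>Substituting y := F(x) into D gives a denominator D(x,F(x))
  in the x alone, which still satisfies condition (0). Since Cn(x,0) = 0, Cn is a combination
  of the y_i with coefficients H_i(x,y), and replacing each H_i by H_i(x,F(x)) yields a numerator
  linear in the y with the same value at y = F(x). Only coprimality may be lost. But a common
  factor c of such a numerator and denominator involves only the x, and the cofactors keep both
  shapes; this follows by comparing the maximal weights of monomials in c times a cofactor,
  for the weights "total degree" and "degree in the y". Cancelling common factors lowers the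
  total degree of the denominator, so it ends at a Hilbert-like certificate.\<close>

lemma prod_single_one:
  "(\<Prod>i\<in>S. Poly_Mapping.single (f i) 1) = Poly_Mapping.single (\<Sum>i\<in>S. f i) (1 :: 'b::comm_semiring_1)"
  by (induction S rule: infinite_finite_induct) (simp_all add: mult_single)

lemma poly_mapping_sum_single:
  "(\<Sum>u\<in>Poly_Mapping.keys p. Poly_Mapping.single u (Poly_Mapping.lookup p u)) = (p :: 'k \<Rightarrow>\<^sub>0 'b::comm_monoid_add)"
proof (rule poly_mapping_eqI)
  fix v
  have "(\<Sum>u\<in>Poly_Mapping.keys p. Poly_Mapping.lookup p u when u = v) = Poly_Mapping.lookup p v"
    by (cases "v \<in> Poly_Mapping.keys p") (auto simp: when_def in_keys_iff)
  then show "Poly_Mapping.lookup (\<Sum>u\<in>Poly_Mapping.keys p. Poly_Mapping.single u (Poly_Mapping.lookup p u)) v =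
      Poly_Mapping.lookup p v"
    by (simp add: lookup_sum lookup_single)
qed

lemma times_eq_sum_single:
  "p * q = (\<Sum>u\<in>Poly_Mapping.keys p. \<Sum>v\<in>Poly_Mapping.keys q.
      Poly_Mapping.single (u + v) (Poly_Mapping.lookup p u * Poly_Mapping.lookup q v :: 'b::comm_semiring_0))"
proof -
  have "p * q = (\<Sum>u\<in>Poly_Mapping.keys p. Poly_Mapping.single u (Poly_Mapping.lookup p u)) *
      (\<Sum>v\<in>Poly_Mapping.keys q. Poly_Mapping.single v (Poly_Mapping.lookup q v))"
    by (simp only: poly_mapping_sum_single)
  then show ?thesis
    by (simp only: sum_product mult_single)
qed

definition restrict_keys :: "('k \<Rightarrow> bool) \<Rightarrow> ('k \<Rightarrow>\<^sub>0 'b::zero) \<Rightarrow> 'k \<Rightarrow>\<^sub>0 'b" where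
  "restrict_keys P p = Poly_Mapping.mapp (\<lambda>u c. c when P u) p"

lemma lookup_restrict_keys:
  "Poly_Mapping.lookup (restrict_keys P p) u = (Poly_Mapping.lookup p u when P u)"
  by (auto simp: restrict_keys_def lookup_mapp when_def in_keys_iff)

lemma keys_restrict_keys: "Poly_Mapping.keys (restrict_keys P p) = {u \<in> Poly_Mapping.keys p. P u}"
  by (auto simp: in_keys_iff lookup_restrict_keys when_def split: if_splits)

lemma restrict_keys_add_compl:
  "restrict_keys P p + restrict_keys (\<lambda>u. \<not> P u) p = (p :: 'k \<Rightarrow>\<^sub>0 'b::monoid_add)"
  by (rule poly_mapping_eqI) (simp add: lookup_add lookup_restrict_keys when_def)

lemma restrict_keys_eq_sum:
  "restrict_keys P p =
     (\<Sum>u\<in>{u \<in> Poly_Mapping.keys p. P u}. Poly_Mapping.single u (Poly_Mapping.lookup p u :: 'b::comm_monoid_add))"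
  using poly_mapping_sum_single[of "restrict_keys P p"]
  by (simp add: keys_restrict_keys lookup_restrict_keys)

section \<open>Evaluation of polynomials\<close>

definition mval :: "(nat \<Rightarrow> 'b::comm_semiring_1) \<Rightarrow> (nat \<Rightarrow>\<^sub>0 nat) \<Rightarrow> 'b" where
  "mval a u = (\<Prod>i\<in>Poly_Mapping.keys u. a i ^ Poly_Mapping.lookup u i)"

lemma mpeval_eq_sum_mval:
  "mpeval phi p a = (\<Sum>u\<in>Poly_Mapping.keys p. phi (Poly_Mapping.lookup p u) * mval a u)"
  by (simp add: mpeval_def mval_def)

lemma mval_eq_prod_superset:
  "finite S \<Longrightarrow> Poly_Mapping.keys u \<subseteq> S \<Longrightarrow> mval a u = (\<Prod>i\<in>S. a i ^ Poly_Mapping.lookup u i)"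
  unfolding mval_def by (rule prod.mono_neutral_left) (auto simp: in_keys_iff)

lemma mval_zero [simp]: "mval a 0 = 1"
  by (simp add: mval_def)

lemma mval_add: "mval a (u + v) = mval a u * mval a v"
proof -
  let ?S = "Poly_Mapping.keys u \<union> Poly_Mapping.keys v"
  have "mval a (u + v) = (\<Prod>i\<in>?S. a i ^ Poly_Mapping.lookup u i * a i ^ Poly_Mapping.lookup v i)"
    using keys_add[of u v] by (subst mval_eq_prod_superset) (auto simp: lookup_add power_add)
  also have "\<dots> = mval a u * mval a v"
    by (simp add: prod.distrib mval_eq_prod_superset[of ?S])
  finally show ?thesis .
qed

lemma mpeval_eq_sum_superset:
  assumes "phi 0 = 0" "finite S" "Poly_Mapping.keys p \<subseteq> S"
  shows "mpeval phi p a = (\<Sum>u\<in>S. phi (Poly_Mapping.lookup p u) * mval a u)"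
  unfolding mpeval_eq_sum_mval
  by (rule sum.mono_neutral_left) (use assms in \<open>auto simp: in_keys_iff\<close>)

lemma mpeval_zero [simp]: "mpeval phi 0 a = 0"
  by (simp add: mpeval_def)

locale coeff_ring_hom =
  fixes phi :: "'a::comm_ring_1 \<Rightarrow> 'b::comm_ring_1"
  assumes add: "phi (x + y) = phi x + phi y" and mult: "phi (x * y) = phi x * phi y"
    and zero: "phi 0 = 0" and one: "phi 1 = 1"
begin

lemma mpeval_add: "mpeval phi (p + q) a = mpeval phi p a + mpeval phi q a"
proof -
  let ?S = "Poly_Mapping.keys p \<union> Poly_Mapping.keys q"
  have "mpeval phi (p + q) a =
      (\<Sum>u\<in>?S. phi (Poly_Mapping.lookup p u) * mval a u + phi (Poly_Mapping.lookup q u) * mval a u)"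
    using keys_add[of p q]
    by (subst mpeval_eq_sum_superset[where phi=phi, OF zero]) (auto simp: lookup_add add distrib_right)
  also have "\<dots> = mpeval phi p a + mpeval phi q a"
    by (simp add: sum.distrib mpeval_eq_sum_superset[where phi=phi, OF zero, of ?S])
  finally show ?thesis .
qed

lemma mpeval_sum: "mpeval phi (sum f S) a = (\<Sum>x\<in>S. mpeval phi (f x) a)"
  by (induction S rule: infinite_finite_induct) (simp_all add: mpeval_add mpeval_zero)

lemma mpeval_single: "mpeval phi (Poly_Mapping.single u c) a = phi c * mval a u"
  by (cases "c = 0") (auto simp: mpeval_eq_sum_mval zero)

lemma mpeval_mult: "mpeval phi (p * q) a = mpeval phi p a * mpeval phi q a"
  unfolding times_eq_sum_single[of p q] mpeval_sum mpeval_single mpeval_eq_sum_mval[of phi p]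
    mpeval_eq_sum_mval[of phi q] sum_product
  by (simp add: mult mval_add mult_ac)

lemma mpeval_mconst: "mpeval phi (mconst c) a = phi c"
  by (simp add: mconst_def mpeval_single)

lemma mpeval_mvar: "mpeval phi (mvar i) a = a i"
  by (simp add: mvar_def mpeval_single one mval_def)

end

interpretation mconst: coeff_ring_hom "mconst :: 'a::comm_ring_1 \<Rightarrow> 'a mpoly"
  by unfold_locales (simp_all add: mconst_def single_add mult_single)

interpretation to_ac: coeff_ring_hom "to_ac :: 'a::field \<Rightarrow> 'a alg_closure"
  by unfold_locales simp_all

lemma mvars_subset_iff:
  "mvars p \<subseteq> V \<longleftrightarrow> (\<forall>u\<in>Poly_Mapping.keys p. Poly_Mapping.keys u \<subseteq> V)"
  by (auto simp: mvars_def)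

lemma keys_subset_if_mvars_subset:
  "u \<in> Poly_Mapping.keys p \<Longrightarrow> mvars p \<subseteq> V \<Longrightarrow> Poly_Mapping.keys u \<subseteq> V"
  by (auto simp: mvars_def)

lemma mvars_zero [simp]: "mvars 0 = {}"
  by (simp add: mvars_def)

lemma mvars_one [simp]: "mvars (1 :: 'a::zero_neq_one mpoly) = {}"
  by (simp add: mvars_def)

lemma mvars_add: "mvars p \<subseteq> V \<Longrightarrow> mvars q \<subseteq> V \<Longrightarrow> mvars (p + q) \<subseteq> V"
  using keys_add[of p q] by (auto simp: mvars_subset_iff)

lemma mvars_mult:
  fixes p q :: "'b::comm_semiring_0 mpoly"
  assumes "mvars p \<subseteq> V" "mvars q \<subseteq> V"
  shows "mvars (p * q) \<subseteq> V"
  unfolding mvars_subset_iff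
proof
  fix w assume "w \<in> Poly_Mapping.keys (p * q)"
  then obtain u v where "w = u + v" "u \<in> Poly_Mapping.keys p" "v \<in> Poly_Mapping.keys q"
    using keys_mult[of p q] by auto
  with assms have "Poly_Mapping.keys u \<union> Poly_Mapping.keys v \<subseteq> V"
    by (auto simp: mvars_subset_iff)
  with \<open>w = u + v\<close> show "Poly_Mapping.keys w \<subseteq> V"
    using keys_add[of u v] by blast
qed

lemma mvars_sum: "(\<And>x. x \<in> S \<Longrightarrow> mvars (f x) \<subseteq> V) \<Longrightarrow> mvars (sum f S) \<subseteq> V"
  by (induction S rule: infinite_finite_induct) (simp_all add: mvars_add)

lemma mvars_prod:
  "(\<And>x. x \<in> S \<Longrightarrow> mvars (f x) \<subseteq> V) \<Longrightarrow> mvars (prod f S :: 'a::comm_semiring_1 mpoly) \<subseteq> V"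
  by (induction S rule: infinite_finite_induct) (simp_all add: mvars_mult)

lemma mvars_power: "mvars p \<subseteq> V \<Longrightarrow> mvars (p ^ k :: 'a::comm_semiring_1 mpoly) \<subseteq> V"
  by (induction k) (simp_all add: mvars_mult)

lemma mvars_mconst [simp]: "mvars (mconst c) = {}"
  by (auto simp: mvars_def mconst_def)

lemma mvars_mvar: "mvars (mvar i :: 'a::zero_neq_one mpoly) = {i}"
  by (simp add: mvars_def mvar_def)

lemma mvars_mpeval:
  assumes "\<And>i. i \<in> mvars p \<Longrightarrow> mvars (a i) \<subseteq> V"
  shows "mvars (mpeval mconst p a :: 'a::comm_ring_1 mpoly) \<subseteq> V"
  unfolding mpeval_eq_sum_mval mval_def
  using assms by (intro mvars_sum mvars_mult mvars_prod mvars_power) (auto simp: mvars_def mconst_def)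

lemma mpeval_cong:
  assumes "mvars p \<subseteq> V" "\<And>i. i \<in> V \<Longrightarrow> a i = b i"
  shows "mpeval phi p a = mpeval phi p b"
  unfolding mpeval_eq_sum_mval mval_def
  using assms by (intro sum.cong prod.cong refl arg_cong2[where f="(*)"]) (auto simp: mvars_def)

lemma mvar_power: "mvar i ^ k = Poly_Mapping.single (Poly_Mapping.single i k) (1 :: 'a::comm_semiring_1)"
  by (induction k) (simp_all add: mvar_def mult_single flip: single_add)

lemma mval_mvar: "mval mvar u = Poly_Mapping.single u (1 :: 'a::comm_semiring_1)"
  unfolding mval_def mvar_power prod_single_one poly_mapping_sum_single ..

lemma mpeval_mconst_mvar: "mpeval mconst p mvar = (p :: 'a::comm_ring_1 mpoly)"
  by (simp add: mpeval_eq_sum_mval mval_mvar mconst_def mult_single poly_mapping_sum_single)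

lemma subst_y_id: "mvars p \<subseteq> {..<n} \<Longrightarrow> subst_y n m Y p = (p :: 'a::comm_ring_1 mpoly)"
  unfolding subst_y_def by (subst mpeval_cong[where b=mvar]) (auto simp: mpeval_mconst_mvar)

lemma subst_y_mvar: "i < m \<Longrightarrow> subst_y n m Y (mvar (n + i)) = (Y i :: 'a::comm_ring_1 mpoly)"
  by (simp add: subst_y_def mconst.mpeval_mvar)

lemma subst_y_add: "subst_y n m Y (p + q) = subst_y n m Y p + subst_y n m Y (q :: 'a::comm_ring_1 mpoly)"
  unfolding subst_y_def by (rule mconst.mpeval_add)

lemma subst_y_mult: "subst_y n m Y (p * q) = subst_y n m Y p * subst_y n m Y (q :: 'a::comm_ring_1 mpoly)"
  unfolding subst_y_def by (rule mconst.mpeval_mult)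

lemma subst_y_sum: "subst_y n m Y (sum f S) = (\<Sum>x\<in>S. subst_y n m Y (f x :: 'a::comm_ring_1 mpoly))"
  unfolding subst_y_def by (rule mconst.mpeval_sum)

lemma subst_y_mconst: "subst_y n m Y (mconst c) = (mconst c :: 'a::comm_ring_1 mpoly)"
  unfolding subst_y_def by (rule mconst.mpeval_mconst)

lemma mvars_subst_y:
  assumes "mvars p \<subseteq> {..<n+m}" "\<And>i. i < m \<Longrightarrow> mvars (Y i) \<subseteq> {..<n}"
  shows "mvars (subst_y n m Y p :: 'a::comm_ring_1 mpoly) \<subseteq> {..<n}"
  unfolding subst_y_def using assms by (intro mvars_mpeval) (auto simp: mvars_mvar)

lemma subst_y_zero_eq_restrict_keys:
  "subst_y n m (\<lambda>_. 0) p = restrict_keys (\<lambda>u. Poly_Mapping.keys u \<subseteq> {..<n}) (p :: 'a::comm_ring_1 mpoly)"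
proof -
  let ?a = "\<lambda>i. if i < n then mvar i else if i < n + m then (0::'a mpoly) else 0"
  have "mconst (Poly_Mapping.lookup p u) * mval ?a u =
      (if Poly_Mapping.keys u \<subseteq> {..<n} then Poly_Mapping.single u (Poly_Mapping.lookup p u) else 0)" for u
  proof (cases "Poly_Mapping.keys u \<subseteq> {..<n}")
    case True
    then have "mval ?a u = mval mvar u"
      unfolding mval_def by (intro prod.cong) auto
    then have "mval ?a u = Poly_Mapping.single u 1"
      by (simp add: mval_mvar)
    with True show ?thesis by (simp add: mconst_def mult_single)
  next
    case False
    then obtain i where "i \<in> Poly_Mapping.keys u" "\<not> i < n" by auto
    then have "mval ?a u = 0"
      unfolding mval_def by (intro prod_zero) (auto simp: in_keys_iff power_0_left)
    with False show ?thesis by simp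
  qed
  then show ?thesis
    by (simp add: subst_y_def mpeval_eq_sum_mval restrict_keys_eq_sum sum.inter_filter)
qed

section \<open>Weights of monomials\<close>

definition deg_from :: "nat \<Rightarrow> (nat \<Rightarrow>\<^sub>0 nat) \<Rightarrow> nat" where
  "deg_from t u = (\<Sum>i\<in>{i \<in> Poly_Mapping.keys u. t \<le> i}. Poly_Mapping.lookup u i)"

lemma deg_from_eq_sum_superset:
  "finite S \<Longrightarrow> Poly_Mapping.keys u \<subseteq> S \<Longrightarrow> deg_from t u = (\<Sum>i\<in>{i \<in> S. t \<le> i}. Poly_Mapping.lookup u i)"
  unfolding deg_from_def by (rule sum.mono_neutral_left) (auto simp: in_keys_iff)

lemma deg_from_add: "deg_from t (u + v) = deg_from t u + deg_from t v"
proof -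
  let ?S = "Poly_Mapping.keys u \<union> Poly_Mapping.keys v"
  have "deg_from t (u + v) = (\<Sum>i\<in>{i \<in> ?S. t \<le> i}. Poly_Mapping.lookup u i + Poly_Mapping.lookup v i)"
    using keys_add[of u v] by (subst deg_from_eq_sum_superset) (auto simp: lookup_add)
  also have "\<dots> = deg_from t u + deg_from t v"
    by (simp add: sum.distrib deg_from_eq_sum_superset[of ?S])
  finally show ?thesis .
qed

lemma deg_from_eq_0_iff: "deg_from t u = 0 \<longleftrightarrow> Poly_Mapping.keys u \<subseteq> {..<t}"
  by (auto simp: deg_from_def in_keys_iff not_less[symmetric])

lemma deg_from_single: "deg_from t (Poly_Mapping.single j k) = (if t \<le> j then k else 0)"
proof -
  have "{i \<in> Poly_Mapping.keys (Poly_Mapping.single j k). t \<le> i} = (if t \<le> j \<and> k \<noteq> 0 then {j} else {})"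
    by auto
  then show ?thesis by (simp add: deg_from_def)
qed

lemma mvars_lessThan_iff_deg_from:
  "mvars p \<subseteq> {..<t} \<longleftrightarrow> (\<forall>u\<in>Poly_Mapping.keys p. deg_from t u = 0)"
  by (simp add: mvars_subset_iff deg_from_eq_0_iff)

definition max_weight :: "('k \<Rightarrow> int) \<Rightarrow> ('k \<Rightarrow>\<^sub>0 'a::zero) \<Rightarrow> int" where
  "max_weight w p = Max (w ` Poly_Mapping.keys p)"

lemma max_weight_ge: "u \<in> Poly_Mapping.keys p \<Longrightarrow> w u \<le> max_weight w p"
  by (simp add: max_weight_def)

lemma max_weight_attained:
  assumes "p \<noteq> 0" shows "\<exists>u\<in>Poly_Mapping.keys p. w u = max_weight w p"
proof -
  have "Max (w ` Poly_Mapping.keys p) \<in> w ` Poly_Mapping.keys p"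
    using assms by (intro Max_in) auto
  then show ?thesis by (auto simp: max_weight_def)
qed

lemma weight_le_if_in_keys_mult:
  fixes w :: "'k::monoid_add \<Rightarrow> int"
  assumes w: "\<And>u v. w (u + v) = w u + w v"
    and "\<And>u. u \<in> Poly_Mapping.keys p \<Longrightarrow> w u \<le> A" "\<And>v. v \<in> Poly_Mapping.keys q \<Longrightarrow> w v \<le> B"
    and "k \<in> Poly_Mapping.keys (p * q)"
  shows "w k \<le> A + B"
proof -
  obtain u v where "k = u + v" "u \<in> Poly_Mapping.keys p" "v \<in> Poly_Mapping.keys q"
    using keys_mult[of p q] assms(4) by auto
  with assms(2,3) show ?thesis by (simp add: w add_mono)
qed

lemma max_weight_mult_le:
  fixes w :: "'k::monoid_add \<Rightarrow> int"
  assumes w: "\<And>u v. w (u + v) = w u + w v" and "p * q \<noteq> 0"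
  shows "max_weight w (p * q) \<le> max_weight w p + max_weight w q"
proof -
  obtain k where "k \<in> Poly_Mapping.keys (p * q)" "w k = max_weight w (p * q)"
    using max_weight_attained[OF \<open>p * q \<noteq> 0\<close>] by blast
  moreover have "w k \<le> max_weight w p + max_weight w q"
    by (rule weight_le_if_in_keys_mult[OF w _ _ \<open>k \<in> _\<close>]) (simp_all add: max_weight_ge)
  ultimately show ?thesis by simp
qed

text \<open>The parts of maximal weight of p and q multiply to a nonzero polynomial, and no other
  pair of monomials reaches that weight, so nothing cancels it in p * q.\<close>
lemma max_weight_sum_in_keys_mult:
  fixes p q :: "'k::{ordered_cancel_comm_monoid_add, linorder} \<Rightarrow>\<^sub>0 'a::idom" and w :: "'k \<Rightarrow> int"
  assumes w: "\<And>u v. w (u + v) = w u + w v" and "p \<noteq> 0" "q \<noteq> 0"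
  shows "\<exists>k\<in>Poly_Mapping.keys (p * q). w k = max_weight w p + max_weight w q"
proof -
  define W1 W2 where "W1 = max_weight w p" and "W2 = max_weight w q"
  define pt pr qt qr where "pt = restrict_keys (\<lambda>u. w u = W1) p" and "pr = restrict_keys (\<lambda>u. w u \<noteq> W1) p"
    and "qt = restrict_keys (\<lambda>u. w u = W2) q" and "qr = restrict_keys (\<lambda>u. w u \<noteq> W2) q"
  have "pt \<noteq> 0" "qt \<noteq> 0"
    using max_weight_attained[OF \<open>p \<noteq> 0\<close>, of w] max_weight_attained[OF \<open>q \<noteq> 0\<close>, of w]
    by (auto simp: pt_def qt_def W1_def W2_def keys_restrict_keys simp flip: keys_eq_empty)
  then obtain k where k: "k \<in> Poly_Mapping.keys (pt * qt)"
    by (metis mult_eq_0_iff keys_eq_empty ex_in_conv)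
  then obtain u v where "k = u + v" "u \<in> Poly_Mapping.keys pt" "v \<in> Poly_Mapping.keys qt"
    using keys_mult[of pt qt] by auto
  then have wk: "w k = W1 + W2"
    by (simp add: w pt_def qt_def keys_restrict_keys)
  have "w k' \<le> W1 + (W2 - 1)" if "k' \<in> Poly_Mapping.keys (pt * qr)" for k'
    by (rule weight_le_if_in_keys_mult[where w=w, OF w _ _ that])
      (auto simp: pt_def qr_def keys_restrict_keys W2_def order.strict_iff_order max_weight_ge)
  moreover have "w k' \<le> (W1 - 1) + W2" if "k' \<in> Poly_Mapping.keys (pr * q)" for k'
    by (rule weight_le_if_in_keys_mult[where w=w, OF w _ _ that])
      (auto simp: pr_def keys_restrict_keys W1_def W2_def order.strict_iff_order max_weight_ge)
  ultimately have "k \<notin> Poly_Mapping.keys (pt * qr + pr * q)"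
    using wk keys_add[of "pt * qr" "pr * q"] by force
  moreover have "p * q = pt * qt + (pt * qr + pr * q)"
  proof -
    have "p = pt + pr" "q = qt + qr"
      by (simp_all add: pt_def pr_def qt_def qr_def restrict_keys_add_compl)
    then show ?thesis by (simp add: algebra_simps)
  qed
  ultimately have "k \<in> Poly_Mapping.keys (p * q)"
    using k by (simp add: in_keys_iff lookup_add)
  with wk show ?thesis
    unfolding W1_def W2_def by blast
qed

lemma max_weight_mult:
  fixes p q :: "'k::{ordered_cancel_comm_monoid_add, linorder} \<Rightarrow>\<^sub>0 'a::idom" and w :: "'k \<Rightarrow> int"
  assumes w: "\<And>u v. w (u + v) = w u + w v" and "p \<noteq> 0" "q \<noteq> 0"
  shows "max_weight w (p * q) = max_weight w p + max_weight w q"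
  using max_weight_mult_le[OF w] max_weight_sum_in_keys_mult[OF w] max_weight_ge[of _ "p * q" w] assms(2,3)
  by (metis antisym mult_eq_0_iff)

lemma weight_add_le_if_keys_mult_le:
  fixes p q :: "'k::{ordered_cancel_comm_monoid_add, linorder} \<Rightarrow>\<^sub>0 'a::idom" and w :: "'k \<Rightarrow> int"
  assumes w: "\<And>u v. w (u + v) = w u + w v" and "p \<noteq> 0" "q \<noteq> 0"
    and B: "\<And>k. k \<in> Poly_Mapping.keys (p * q) \<Longrightarrow> w k \<le> B"
    and "u \<in> Poly_Mapping.keys p" "v \<in> Poly_Mapping.keys q"
  shows "w u + w v \<le> B"
proof -
  have "w u + w v \<le> max_weight w (p * q)"
    using assms by (simp add: max_weight_mult add_mono max_weight_ge)
  also obtain k where "k \<in> Poly_Mapping.keys (p * q)" "w k = max_weight w (p * q)"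
    using max_weight_attained[of "p * q" w] assms(2,3) by auto
  then have "max_weight w (p * q) \<le> B" using B by metis
  finally show ?thesis .
qed

lemma mvars_left_factor_lessThan:
  fixes p q :: "'a::idom mpoly"
  assumes "mvars (p * q) \<subseteq> {..<t}" "p * q \<noteq> 0"
  shows "mvars p \<subseteq> {..<t}"
proof -
  have w: "\<And>u v. int (deg_from t (u + v)) = int (deg_from t u) + int (deg_from t v)"
    by (simp add: deg_from_add)
  from assms(2) have "p \<noteq> 0" "q \<noteq> 0" by auto
  then obtain v where v: "v \<in> Poly_Mapping.keys q" by fastforce
  have "int (deg_from t u) + int (deg_from t v) \<le> 0" if "u \<in> Poly_Mapping.keys p" for u
    using assms(1) by (intro weight_add_le_if_keys_mult_le[OF w \<open>p \<noteq> 0\<close> \<open>q \<noteq> 0\<close> _ that v])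
      (simp add: mvars_lessThan_iff_deg_from)
  then have "deg_from t u = 0" if "u \<in> Poly_Mapping.keys p" for u
    using that by force
  then show ?thesis by (simp add: mvars_lessThan_iff_deg_from)
qed

lemma mvars_empty_imp_mconst: "mvars p = {} \<Longrightarrow> p = mconst (Poly_Mapping.lookup p 0)"
  unfolding mconst_def
  by (rule poly_mapping_eqI) (auto simp: mvars_def lookup_single when_def in_keys_iff)

definition total_degree :: "'a::zero mpoly \<Rightarrow> int" where
  "total_degree p = max_weight (\<lambda>u. int (deg_from 0 u)) p"

lemma total_degree_mult:
  "p \<noteq> 0 \<Longrightarrow> q \<noteq> 0 \<Longrightarrow> total_degree (p * q) = total_degree p + total_degree (q :: 'a::idom mpoly)"
  unfolding total_degree_def by (rule max_weight_mult) (simp_all add: deg_from_add)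

lemma total_degree_nonneg: "p \<noteq> 0 \<Longrightarrow> 0 \<le> total_degree p"
  using max_weight_attained[of p "\<lambda>u. int (deg_from 0 u)"] by (auto simp: total_degree_def)

lemma total_degree_pos_if_not_unit:
  fixes p :: "'a::field mpoly"
  assumes "p \<noteq> 0" "\<not> p dvd 1"
  shows "0 < total_degree p"
proof (rule ccontr)
  assume "\<not> 0 < total_degree p"
  then have "\<forall>u\<in>Poly_Mapping.keys p. deg_from 0 u = 0"
    using max_weight_ge[of _ p "\<lambda>u. int (deg_from 0 u)"] by (fastforce simp: total_degree_def)
  then have "mvars p = {}"
    using mvars_lessThan_iff_deg_from[of p 0] by simp
  then have "p = mconst (Poly_Mapping.lookup p 0)" "Poly_Mapping.lookup p 0 \<noteq> 0"
    using mvars_empty_imp_mconst[of p] assms(1) by (auto simp: mconst_def)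
  then have "p * mconst (inverse (Poly_Mapping.lookup p 0)) = 1"
    by (metis mconst.mpeval_mconst mconst_def mult_single add_0 right_inverse single_one)
  with assms(2) show False by (metis dvdI)
qed

section \<open>Polynomials linear in the placeholder variables\<close>

lemma single_add_minus_single:
  "Poly_Mapping.lookup u i \<noteq> 0 \<Longrightarrow> Poly_Mapping.single i 1 + (u - Poly_Mapping.single i 1) = (u :: 'k \<Rightarrow>\<^sub>0 nat)"
  by (rule poly_mapping_eqI) (auto simp: lookup_add lookup_minus lookup_single when_def)

lemma mvar_mult_single_minus:
  "Poly_Mapping.lookup u i \<noteq> 0 \<Longrightarrow>
    mvar i * Poly_Mapping.single (u - Poly_Mapping.single i 1) c = Poly_Mapping.single u (c :: 'a::comm_semiring_1)"
  unfolding mvar_def mult_single mult_1 by (subst single_add_minus_single) auto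

lemma keys_subset_keys_add: "Poly_Mapping.keys u \<subseteq> Poly_Mapping.keys (u + v :: 'k \<Rightarrow>\<^sub>0 nat)"
  by (auto simp: in_keys_iff lookup_add)

text \<open>Each monomial involving a placeholder is attributed to its placeholder of least index.\<close>
lemma decompose_by_placeholders:
  fixes p :: "'a::comm_ring_1 mpoly"
  assumes "mvars p \<subseteq> {..<n+m}"
  obtains H where "p = subst_y n m (\<lambda>_. 0) p + (\<Sum>i<m. mvar (n + i) * H i)"
    and "\<And>i u. u \<in> Poly_Mapping.keys (H i) \<Longrightarrow> u + Poly_Mapping.single (n + i) 1 \<in> Poly_Mapping.keys p"
proof -
  define S where "S = {u \<in> Poly_Mapping.keys p. \<not> Poly_Mapping.keys u \<subseteq> {..<n}}"
  define j where "j u = Min {i \<in> Poly_Mapping.keys u. n \<le> i} - n" for u :: "nat \<Rightarrow>\<^sub>0 nat"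
  have j: "j u < m \<and> Poly_Mapping.lookup u (n + j u) \<noteq> 0" if "u \<in> S" for u
  proof -
    have "Min {i \<in> Poly_Mapping.keys u. n \<le> i} \<in> {i \<in> Poly_Mapping.keys u. n \<le> i}"
      using that by (intro Min_in) (auto simp: S_def)
    moreover have "Poly_Mapping.keys u \<subseteq> {..<n+m}"
      using that assms by (auto simp: S_def mvars_subset_iff)
    ultimately have "n + j u \<in> Poly_Mapping.keys u" "n + j u < n + m"
      unfolding j_def by auto
    then show ?thesis by (simp add: in_keys_iff)
  qed
  define H where "H i = (\<Sum>u\<in>{u \<in> S. j u = i}.
      Poly_Mapping.single (u - Poly_Mapping.single (n + i) 1) (Poly_Mapping.lookup p u))" for i
  have "mvar (n + i) * H i = (\<Sum>u\<in>{u \<in> S. j u = i}. Poly_Mapping.single u (Poly_Mapping.lookup p u))" for i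
    unfolding H_def sum_distrib_left using j by (intro sum.cong refl mvar_mult_single_minus) auto
  then have "(\<Sum>i<m. mvar (n + i) * H i) =
      (\<Sum>i<m. \<Sum>u\<in>{u \<in> S. j u = i}. Poly_Mapping.single u (Poly_Mapping.lookup p u))"
    by simp
  also have "\<dots> = (\<Sum>u\<in>S. Poly_Mapping.single u (Poly_Mapping.lookup p u))"
    using j by (intro sum.group) (auto simp: S_def)
  also have "\<dots> = restrict_keys (\<lambda>u. \<not> Poly_Mapping.keys u \<subseteq> {..<n}) p"
    by (simp add: restrict_keys_eq_sum S_def)
  finally show ?thesis
  proof (intro that)
    fix i u assume "u \<in> Poly_Mapping.keys (H i)"
    then obtain v where "v \<in> S" "j v = i" "u = v - Poly_Mapping.single (n + i) 1"
      using keys_sum[of _ "{u \<in> S. j u = i}"] by (fastforce simp: H_def split: if_splits)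
    with j[of v] show "u + Poly_Mapping.single (n + i) 1 \<in> Poly_Mapping.keys p"
      using single_add_minus_single[of v "n + i"] by (simp add: S_def add.commute)
  qed (simp add: subst_y_zero_eq_restrict_keys restrict_keys_add_compl)
qed

definition linear_in_y :: "nat \<Rightarrow> nat \<Rightarrow> 'a::zero mpoly \<Rightarrow> bool" where
  "linear_in_y n m p \<longleftrightarrow> mvars p \<subseteq> {..<n+m} \<and> (\<forall>u\<in>Poly_Mapping.keys p. deg_from n u = 1)"

lemma linear_in_y_sum_mvar_mult:
  fixes Gs :: "nat \<Rightarrow> 'a::comm_ring_1 mpoly"
  assumes "\<forall>i<m. mvars (Gs i) \<subseteq> {..<n}"
  shows "linear_in_y n m (\<Sum>i<m. mvar (n + i) * Gs i)"
  unfolding linear_in_y_def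
proof
  have "mvars (Gs i) \<subseteq> {..<n+m}" if "i < m" for i
  proof -
    from assms that have "mvars (Gs i) \<subseteq> {..<n}" by blast
    then show ?thesis by auto
  qed
  then show "mvars (\<Sum>i<m. mvar (n + i) * Gs i) \<subseteq> {..<n+m}"
    by (intro mvars_sum mvars_mult) (auto simp: mvars_mvar)
  show "\<forall>k\<in>Poly_Mapping.keys (\<Sum>i<m. mvar (n + i) * Gs i). deg_from n k = 1"
  proof
    fix k assume "k \<in> Poly_Mapping.keys (\<Sum>i<m. mvar (n + i) * Gs i)"
    then obtain i where "i < m" "k \<in> Poly_Mapping.keys (mvar (n + i) * Gs i)"
      using keys_sum[of "\<lambda>i. mvar (n + i) * Gs i" "{..<m}"] by blast
    then obtain v where "k = Poly_Mapping.single (n + i) 1 + v" "v \<in> Poly_Mapping.keys (Gs i)"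
      using keys_mult[of "mvar (n + i)" "Gs i"] by (auto simp: mvar_def)
    moreover have "deg_from n v = 0"
      using calculation(2) assms \<open>i < m\<close> by (simp add: mvars_lessThan_iff_deg_from)
    ultimately show "deg_from n k = 1"
      by (simp add: deg_from_add deg_from_single)
  qed
qed

lemma subst_y_zero_if_linear_in_y:
  "linear_in_y n m p \<Longrightarrow> subst_y n m (\<lambda>_. 0) p = (0 :: 'a::comm_ring_1 mpoly)"
  unfolding subst_y_zero_eq_restrict_keys keys_eq_empty[symmetric] keys_restrict_keys
  by (auto simp: linear_in_y_def deg_from_eq_0_iff[symmetric])

lemma linear_in_y_imp_sum_mvar_mult:
  fixes p :: "'a::comm_ring_1 mpoly"
  assumes "linear_in_y n m p"
  obtains Gs where "\<forall>i<m. mvars (Gs i) \<subseteq> {..<n}" "p = (\<Sum>i<m. mvar (n + i) * Gs i)"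
proof -
  obtain H where H: "p = subst_y n m (\<lambda>_. 0) p + (\<Sum>i<m. mvar (n + i) * H i)"
    and keys_H: "\<And>i u. u \<in> Poly_Mapping.keys (H i) \<Longrightarrow> u + Poly_Mapping.single (n + i) 1 \<in> Poly_Mapping.keys p"
    using decompose_by_placeholders assms unfolding linear_in_y_def by blast
  have "deg_from n u = 0" if "u \<in> Poly_Mapping.keys (H i)" for i u
    using assms keys_H[OF that] by (auto simp: linear_in_y_def deg_from_add deg_from_single)
  then have "\<forall>i<m. mvars (H i) \<subseteq> {..<n}"
    by (simp add: mvars_lessThan_iff_deg_from)
  with H show ?thesis
    using that subst_y_zero_if_linear_in_y[OF assms] by simp
qed

lemma linear_in_y_right_factor:
  fixes c f :: "'a::idom mpoly"
  assumes lin: "linear_in_y n m (c * f)" and "c \<noteq> 0" "mvars c \<subseteq> {..<n}"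
  shows "linear_in_y n m f"
proof (cases "f = 0")
  case False
  have "mvars f \<subseteq> {..<n+m}"
    using lin \<open>c \<noteq> 0\<close> False mvars_left_factor_lessThan[of f c]
    by (simp add: linear_in_y_def mult.commute)
  moreover obtain u where u: "u \<in> Poly_Mapping.keys c"
    using \<open>c \<noteq> 0\<close> by fastforce
  then have "deg_from n u = 0"
    using assms(3) by (simp add: mvars_lessThan_iff_deg_from)
  have w: "\<And>u v. int (deg_from n (u + v)) = int (deg_from n u) + int (deg_from n v)"
    and w': "\<And>u v. - int (deg_from n (u + v)) = - int (deg_from n u) + - int (deg_from n v)"
    by (simp_all add: deg_from_add)
  have "deg_from n v = 1" if "v \<in> Poly_Mapping.keys f" for v
  proof -
    have "int (deg_from n u) + int (deg_from n v) \<le> 1"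
      using lin by (intro weight_add_le_if_keys_mult_le[OF w \<open>c \<noteq> 0\<close> False _ u that])
        (simp add: linear_in_y_def)
    moreover have "- int (deg_from n u) + - int (deg_from n v) \<le> - 1"
      using lin by (intro weight_add_le_if_keys_mult_le[OF w' \<open>c \<noteq> 0\<close> False _ u that])
        (simp add: linear_in_y_def)
    ultimately show ?thesis
      using \<open>deg_from n u = 0\<close> by simp
  qed
  ultimately show ?thesis
    by (simp add: linear_in_y_def)
qed (simp add: linear_in_y_def)

section \<open>Certificates with denominator in the original variables\<close>

text \<open>Condition (0) of a RIPS certificate, for a denominator not involving the placeholders.\<close>
definition admissible_denominator ::
  "nat \<Rightarrow> nat \<Rightarrow> (nat \<Rightarrow> 'a::field mpoly) \<Rightarrow> 'a mpoly \<Rightarrow> 'a mpoly \<Rightarrow> bool" where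
  "admissible_denominator n m F G D \<longleftrightarrow>
     ((\<exists>c. c \<noteq> 0 \<and> G = mconst c) \<longrightarrow> (\<exists>d. D = mconst d)) \<and>
     (\<not> (\<exists>c. c \<noteq> 0 \<and> G = mconst c) \<longrightarrow>
        (\<forall>Z. irr_component n (variety n m F) Z \<longrightarrow> \<not> (\<forall>p\<in>Z. mpeval to_ac D p = 0)))"

lemma admissible_denominator_right_factor:
  assumes adm: "admissible_denominator n m F G (c * e)" and "c * e \<noteq> 0"
  shows "admissible_denominator n m F G e"
  unfolding admissible_denominator_def
proof (intro conjI impI allI notI)
  assume "\<exists>c. c \<noteq> 0 \<and> G = mconst c"
  then obtain d where "c * e = mconst d"
    using adm by (auto simp: admissible_denominator_def)
  then have "mvars e \<subseteq> {..<0}"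
    using \<open>c * e \<noteq> 0\<close> mvars_left_factor_lessThan[of e c 0] by (simp add: mult.commute)
  then show "\<exists>d. e = mconst d"
    using mvars_empty_imp_mconst by blast
next
  fix Z assume "\<not> (\<exists>c. c \<noteq> 0 \<and> G = mconst c)" "irr_component n (variety n m F) Z"
    and "\<forall>p\<in>Z. mpeval to_ac e p = 0"
  with adm show False
    by (auto simp: admissible_denominator_def to_ac.mpeval_mult)
qed

definition hilbert_precert ::
  "nat \<Rightarrow> nat \<Rightarrow> (nat \<Rightarrow> 'a::field mpoly) \<Rightarrow> 'a mpoly \<Rightarrow> 'a mpoly \<Rightarrow> 'a mpoly \<Rightarrow> bool" where
  "hilbert_precert n m F G Cn D \<longleftrightarrow> D \<noteq> 0 \<and> mvars D \<subseteq> {..<n} \<and> linear_in_y n m Cn \<and>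
     subst_y n m F Cn = G * D \<and> admissible_denominator n m F G D"

lemma hilbert_precert_cancel_common_factor:
  assumes "hilbert_precert n m F G (c * f) (c * e)"
  shows "hilbert_precert n m F G f e"
proof -
  from assms have ce: "c * e \<noteq> 0" "mvars (c * e) \<subseteq> {..<n}" and lin: "linear_in_y n m (c * f)"
    and subst: "subst_y n m F (c * f) = G * (c * e)" and adm: "admissible_denominator n m F G (c * e)"
    by (simp_all add: hilbert_precert_def)
  from ce have "c \<noteq> 0" "e \<noteq> 0" by auto
  have c: "mvars c \<subseteq> {..<n}"
    using mvars_left_factor_lessThan[OF ce(2,1)] .
  have "mvars e \<subseteq> {..<n}"
    using mvars_left_factor_lessThan[of e c n] ce unfolding mult.commute[of c e] by simp
  moreover have "linear_in_y n m f"
    using lin \<open>c \<noteq> 0\<close> c by (rule linear_in_y_right_factor)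
  moreover have "c * subst_y n m F f = c * (G * e)"
    using subst by (simp add: subst_y_mult subst_y_id[OF c] ac_simps)
  then have "subst_y n m F f = G * e"
    using \<open>c \<noteq> 0\<close> by simp
  moreover have "admissible_denominator n m F G e"
    using adm ce(1) by (rule admissible_denominator_right_factor)
  ultimately show ?thesis
    using \<open>e \<noteq> 0\<close> by (simp add: hilbert_precert_def)
qed

text \<open>Each cancellation of a non-unit common factor lowers the total degree of the denominator.\<close>
lemma hilbert_precert_coprime:
  assumes "hilbert_precert n m F G Cn D"
  shows "\<exists>Cn' D'. hilbert_precert n m F G Cn' D' \<and> (\<forall>c. c dvd Cn' \<longrightarrow> c dvd D' \<longrightarrow> c dvd 1)"
  using assms
proof (induction "nat (total_degree D)" arbitrary: Cn D rule: less_induct)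
  case less
  show ?case
  proof (cases "\<forall>c. c dvd Cn \<longrightarrow> c dvd D \<longrightarrow> c dvd 1")
    case False
    then obtain c where c: "c dvd Cn" "c dvd D" "\<not> c dvd 1"
      by blast
    then obtain f e where "Cn = c * f" "D = c * e"
      by (meson dvdE)
    with less.prems have pre: "hilbert_precert n m F G f e"
      using hilbert_precert_cancel_common_factor by blast
    have "c \<noteq> 0" "e \<noteq> 0"
      using less.prems \<open>D = c * e\<close> by (auto simp: hilbert_precert_def)
    then have "nat (total_degree e) < nat (total_degree D)"
      using \<open>D = c * e\<close> total_degree_mult[of c e] total_degree_pos_if_not_unit[of c]
        total_degree_nonneg[of e] c(3) by simp
    with pre show ?thesis by (intro less.hyps)
  qed (use less.prems in blast)
qed

lemma hilbert_precert_of_RIPS_cert: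
  assumes F: "\<forall>i<m. mvars (F i) \<subseteq> {..<n}" and cert: "RIPS_cert n m F G Cn D"
  shows "\<exists>Cn'. hilbert_precert n m F G Cn' (subst_y n m F D)"
proof -
  from cert have Cn: "mvars Cn \<subseteq> {..<n+m}" and D: "mvars D \<subseteq> {..<n+m}"
    and Cn_0: "subst_y n m (\<lambda>_. 0) Cn = 0" and D_F: "subst_y n m F D \<noteq> 0"
    and Cn_F: "subst_y n m F Cn = G * subst_y n m F D"
    and adm_const: "(\<exists>c. c \<noteq> 0 \<and> G = mconst c) \<longrightarrow> (\<exists>d. D = mconst d)"
    and adm_comp: "\<not> (\<exists>c. c \<noteq> 0 \<and> G = mconst c) \<longrightarrow>
      (\<forall>Z. irr_component n (variety n m F) Z \<longrightarrow> \<not> (\<forall>p\<in>Z. mpeval to_ac (subst_y n m F D) p = 0))"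
    by (simp_all add: RIPS_cert_def)
  obtain H where H: "Cn = subst_y n m (\<lambda>_. 0) Cn + (\<Sum>i<m. mvar (n + i) * H i)"
    and keys_H: "\<And>i u. u \<in> Poly_Mapping.keys (H i) \<Longrightarrow> u + Poly_Mapping.single (n + i) 1 \<in> Poly_Mapping.keys Cn"
    using decompose_by_placeholders[OF Cn] by blast
  have "mvars (H i) \<subseteq> {..<n+m}" for i
  proof (unfold mvars_subset_iff, intro ballI)
    fix u assume "u \<in> Poly_Mapping.keys (H i)"
    then have "Poly_Mapping.keys (u + Poly_Mapping.single (n + i) 1) \<subseteq> {..<n+m}"
      by (intro keys_subset_if_mvars_subset[OF keys_H Cn])
    then show "Poly_Mapping.keys u \<subseteq> {..<n+m}"
      by (rule order_trans[OF keys_subset_keys_add])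
  qed
  define Gs where "Gs i = subst_y n m F (H i)" for i
  have Gs: "\<forall>i<m. mvars (Gs i) \<subseteq> {..<n}"
    unfolding Gs_def using F \<open>\<And>i. mvars (H i) \<subseteq> {..<n+m}\<close> by (simp add: mvars_subst_y)
  have "subst_y n m F (\<Sum>i<m. mvar (n + i) * Gs i) = (\<Sum>i<m. F i * Gs i)"
    using Gs by (simp add: subst_y_sum subst_y_mult subst_y_mvar subst_y_id)
  also have "\<dots> = subst_y n m F Cn"
    by (subst H) (simp add: Cn_0 subst_y_add subst_y_sum subst_y_mult subst_y_mvar Gs_def)
  finally have "subst_y n m F (\<Sum>i<m. mvar (n + i) * Gs i) = G * subst_y n m F D"
    using Cn_F by simp
  moreover have "admissible_denominator n m F G (subst_y n m F D)"
    using adm_const adm_comp unfolding admissible_denominator_def by (metis subst_y_mconst)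
  ultimately have "hilbert_precert n m F G (\<Sum>i<m. mvar (n + i) * Gs i) (subst_y n m F D)"
    using D_F D F Gs by (simp add: hilbert_precert_def mvars_subst_y linear_in_y_sum_mvar_mult)
  then show ?thesis ..
qed

lemma Hilbert_like_RIPS_cert_if_hilbert_precert:
  assumes pre: "hilbert_precert n m F G Cn D"
    and coprime: "\<forall>c. c dvd Cn \<longrightarrow> c dvd D \<longrightarrow> c dvd 1"
  shows "Hilbert_like_RIPS_cert n m F G Cn D"
proof -
  from pre have D: "D \<noteq> 0" "mvars D \<subseteq> {..<n}" and lin: "linear_in_y n m Cn"
    and Cn_F: "subst_y n m F Cn = G * D" and adm: "admissible_denominator n m F G D"
    by (simp_all add: hilbert_precert_def)
  obtain Gs where Gs: "\<forall>i<m. mvars (Gs i) \<subseteq> {..<n}" "Cn = (\<Sum>i<m. mvar (n + i) * Gs i)"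
    using linear_in_y_imp_sum_mvar_mult[OF lin] .
  have "mvars D \<subseteq> {..<n+m}"
    using D(2) by auto
  then have "RIPS_cert n m F G Cn D"
    unfolding RIPS_cert_def subst_y_id[OF D(2)]
    using lin D Cn_F adm coprime subst_y_zero_if_linear_in_y[OF lin]
    by (simp add: linear_in_y_def admissible_denominator_def)
  with D(2) Gs show ?thesis
    unfolding Hilbert_like_RIPS_cert_def by blast
qed

theorem lemmaB9:
  fixes G :: "'a::field mpoly" and F :: "nat \<Rightarrow> 'a mpoly" and n m :: nat
  assumes "mvars G \<subseteq> {..<n}"
    and "\<forall>i<m. mvars (F i) \<subseteq> {..<n}"
    and "\<exists>Cn D. RIPS_cert n m F G Cn D"
  shows "\<exists>Cn D. Hilbert_like_RIPS_cert n m F G Cn D"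
proof -
  obtain Cn D where "RIPS_cert n m F G Cn D"
    using assms(3) by blast
  then obtain Cn' where "hilbert_precert n m F G Cn' (subst_y n m F D)"
    using hilbert_precert_of_RIPS_cert[OF assms(2)] by blast
  then obtain Cn'' D'' where "hilbert_precert n m F G Cn'' D''"
      and "\<forall>c. c dvd Cn'' \<longrightarrow> c dvd D'' \<longrightarrow> c dvd 1"
    using hilbert_precert_coprime by metis
  then have "Hilbert_like_RIPS_cert n m F G Cn'' D''"
    by (rule Hilbert_like_RIPS_cert_if_hilbert_precert)
  then show ?thesis by (intro exI)
qed

end
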